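(* Let $K\in\mathbb{E}_{Büchi}$ and let $\dot-$ be a contraction function on $K$. Then $\dot-$ is rational and remains in $\mathbb{E}_{Büchi}$ if and only if $\dot-=\dot-_\gamma$ for some Büchi choice function $\gamma$.
   Context: Fix a finite nonempty $AP$. LTL formulae $\varphi::=\bot\mid p\mid\neg\varphi\mid\varphi\lor\varphi\mid X\varphi\mid\varphi U\varphi$ with standard semantics on traces in $(2^{AP})^\omega$; $\mathrm{Cn}_{LTL}(X)$ = formulae satisfied by every (finite) Kripke structure all of whose traces satisfy all of $X$; $\varphi\equiv\psi$ iff $\mathrm{Cn}_{LTL}(\{\varphi\})=\mathrm{Cn}_{LTL}(\{\psi\})$; $K+\varphi:=\mathrm{Cn}_{LTL}(K\cup\{\varphi\})$. Büchi automata over $2^{AP}$ (runs from initial states visiting recurrence states infinitely often), language $\mathcal{L}(A)$, $\mathrm{supp}(A):=\{\varphi\mid\pi\models\varphi\ \forall\pi\in\mathcal{L}(A)\}$; $\mathbb{E}_{Büchi}:=\{\mathrm{supp}(A)\mid A$ Büchi automaton$\}$. A contraction function on theory $K$ maps each formula $\varphi$ to $K\dot-\varphi$; rational means: (K1) $K\dot-\varphi=\mathrm{Cn}_{LTL}(K\dot-\varphi)$; (K2) $K\dot-\varphi\subseteq K$; (K3) $\varphi\notin K\Rightarrow K\dot-\varphi=K$; (K4) $\varphi\notin\mathrm{Cn}_{LTL}(\emptyset)\Rightarrow\varphi\notin K\dot-\varphi$; (K5) $K\subseteq(K\dot-\varphi)+\varphi$; (K6) $\varphi\equiv\psi\Rightarrow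 K\dot-\varphi=K\dot-\psi$. It remains in $\mathbb{E}_{Büchi}$ if all values lie in $\mathbb{E}_{Büchi}$. A Büchi choice function $\gamma$ maps each LTL formula to a Büchi automaton such that (BF1) $\mathcal{L}(\gamma(\varphi))\neq\emptyset$; (BF2) if $\varphi$ is not a tautology then $\neg\varphi\in\mathrm{supp}(\gamma(\varphi))$; (BF3) if $\varphi\equiv\psi$ then $\mathcal{L}(\gamma(\varphi))=\mathcal{L}(\gamma(\psi))$. The Büchi contraction function induced by $\gamma$ on $K$ is $K\dot-_\gamma\varphi:=K\cap\mathrm{supp}(\gamma(\varphi))$ if $\varphi\notin\mathrm{Cn}_{LTL}(\emptyset)$ and $\varphi\in K$, and $K\dot-_\gamma\varphi:=K$ otherwise. *)

theory Defs
  imports Main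
begin

datatype 'ap ltl =
    LBot
  | LProp 'ap
  | LNeg "'ap ltl"
  | LOr "'ap ltl" "'ap ltl"
  | LNext "'ap ltl"
  | LUntil "'ap ltl" "'ap ltl"

type_synonym 'ap trace = "nat \<Rightarrow> 'ap set"

definition suffix :: "nat \<Rightarrow> 'ap trace \<Rightarrow> 'ap trace" where
  "suffix i \<pi> = (\<lambda>j. \<pi> (i + j))"

fun sat :: "'ap trace \<Rightarrow> 'ap ltl \<Rightarrow> bool" where
  "sat \<pi> LBot = False"
| "sat \<pi> (LProp p) = (p \<in> \<pi> 0)"
| "sat \<pi> (LNeg \<phi>) = (\<not> sat \<pi> \<phi>)"
| "sat \<pi> (LOr \<phi> \<psi>) = (sat \<pi> \<phi> \<or> sat \<pi> \<psi>)"
| "sat \<pi> (LNext \<phi>) = sat (suffix 1 \<pi>) \<phi>"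
| "sat \<pi> (LUntil \<phi> \<psi>) =
     (\<exists>k. sat (suffix k \<pi>) \<psi> \<and> (\<forall>j<k. sat (suffix j \<pi>) \<phi>))"

definition tautology :: "'ap ltl \<Rightarrow> bool" where
  "tautology \<phi> = (\<forall>\<pi>. sat \<pi> \<phi>)"

record 'ap kripke =
  kstates :: "nat set"
  kinit   :: "nat set"
  ktrans  :: "(nat \<times> nat) set"
  klabel  :: "nat \<Rightarrow> 'ap set"

definition kripke_wf :: "'ap kripke \<Rightarrow> bool" where
  "kripke_wf M = (finite (kstates M) \<and> kinit M \<subseteq> kstates M
     \<and> ktrans M \<subseteq> kstates M \<times> kstates M
     \<and> (\<forall>s\<in>kstates M. \<exists>t. (s, t) \<in> ktrans M))"

definition ktraces :: "'ap kripke \<Rightarrow> 'ap trace set" where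
  "ktraces M = {klabel M \<circ> \<rho> | \<rho>. \<rho> 0 \<in> kinit M \<and> (\<forall>i. (\<rho> i, \<rho> (Suc i)) \<in> ktrans M)}"

definition kmodels :: "'ap kripke \<Rightarrow> 'ap ltl \<Rightarrow> bool" where
  "kmodels M \<phi> = (\<forall>\<pi>\<in>ktraces M. sat \<pi> \<phi>)"

definition Cn :: "'ap ltl set \<Rightarrow> 'ap ltl set" where
  "Cn X = {\<phi>. \<forall>M. kripke_wf M \<and> (\<forall>\<psi>\<in>X. kmodels M \<psi>) \<longrightarrow> kmodels M \<phi>}"

definition ltl_equiv :: "'ap ltl \<Rightarrow> 'ap ltl \<Rightarrow> bool" where
  "ltl_equiv \<phi> \<psi> = (Cn {\<phi>} = Cn {\<psi>})"

definition expansion :: "'ap ltl set \<Rightarrow> 'ap ltl \<Rightarrow> 'ap ltl set" where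
  "expansion K \<phi> = Cn (K \<union> {\<phi>})"

record 'ap buchi =
  bstates :: "nat set"
  binit   :: "nat set"
  btrans  :: "(nat \<times> 'ap set \<times> nat) set"
  bacc    :: "nat set"

definition buchi_wf :: "'ap buchi \<Rightarrow> bool" where
  "buchi_wf A = (finite (bstates A) \<and> binit A \<subseteq> bstates A \<and> bacc A \<subseteq> bstates A
     \<and> btrans A \<subseteq> bstates A \<times> UNIV \<times> bstates A)"

definition lang :: "'ap buchi \<Rightarrow> 'ap trace set" where
  "lang A = {w. \<exists>\<rho>. \<rho> 0 \<in> binit A \<and> (\<forall>i. (\<rho> i, w i, \<rho> (Suc i)) \<in> btrans A)
                 \<and> (\<exists>\<^sub>\<infinity>i. \<rho> i \<in> bacc A)}"

definition supp :: "'ap buchi \<Rightarrow> 'ap ltl set" where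
  "supp A = {\<phi>. \<forall>\<pi>\<in>lang A. sat \<pi> \<phi>}"

definition E_Buchi :: "'ap ltl set set" where
  "E_Buchi = {supp A | A. buchi_wf A}"

definition rational_contraction :: "'ap ltl set \<Rightarrow> ('ap ltl \<Rightarrow> 'ap ltl set) \<Rightarrow> bool" where
  "rational_contraction K c =
     ((\<forall>\<phi>. c \<phi> = Cn (c \<phi>))
    \<and> (\<forall>\<phi>. c \<phi> \<subseteq> K)
    \<and> (\<forall>\<phi>. \<phi> \<notin> K \<longrightarrow> c \<phi> = K)
    \<and> (\<forall>\<phi>. \<phi> \<notin> Cn {} \<longrightarrow> \<phi> \<notin> c \<phi>)
    \<and> (\<forall>\<phi>. K \<subseteq> expansion (c \<phi>) \<phi>)
    \<and> (\<forall>\<phi> \<psi>. ltl_equiv \<phi> \<psi> \<longrightarrow> c \<phi> = c \<psi>))"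

definition remains_in_E_Buchi :: "('ap ltl \<Rightarrow> 'ap ltl set) \<Rightarrow> bool" where
  "remains_in_E_Buchi c = (\<forall>\<phi>. c \<phi> \<in> E_Buchi)"

definition buchi_choice :: "('ap ltl \<Rightarrow> 'ap buchi) \<Rightarrow> bool" where
  "buchi_choice \<gamma> =
     ((\<forall>\<phi>. buchi_wf (\<gamma> \<phi>))
    \<and> (\<forall>\<phi>. lang (\<gamma> \<phi>) \<noteq> {})
    \<and> (\<forall>\<phi>. \<not> tautology \<phi> \<longrightarrow> LNeg \<phi> \<in> supp (\<gamma> \<phi>))
    \<and> (\<forall>\<phi> \<psi>. ltl_equiv \<phi> \<psi> \<longrightarrow> lang (\<gamma> \<phi>) = lang (\<gamma> \<psi>)))"

definition buchi_contraction ::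
  "'ap ltl set \<Rightarrow> ('ap ltl \<Rightarrow> 'ap buchi) \<Rightarrow> 'ap ltl \<Rightarrow> 'ap ltl set" where
  "buchi_contraction K \<gamma> \<phi> =
     (if \<phi> \<notin> Cn {} \<and> \<phi> \<in> K then K \<inter> supp (\<gamma> \<phi>) else K)"

end

theory Submission
  imports Defs "HOL-Library.Infinite_Set"
begin

text \<open>The consequence operator Cn is defined through finite Kripke structures, that is
  through ultimately periodic traces (lassos), whereas supports of Buchi automata quantify
  over all accepted words. The two agree: the product of a Buchi automaton with the tableau
  of an LTL formula is again (after degeneralization) a Buchi automaton, and every nonempty
  Buchi language contains a lasso. Hence supports are closed under Cn, Cn of the empty set
  consists of the tautologies, and equivalent formulas have the same models.

  A Buchi contraction K \<inter> supp (\<gamma> \<phi>) then satisfies the postulates: recovery holds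
  because \<not>\<phi> \<or> \<psi> lies in it for every \<psi> \<in> K, and it stays in E_Buchi since
  supp A \<inter> supp B is the support of an automaton for the union of the languages.
  Conversely, if a rational contraction has c \<phi> = supp B, then c \<phi> = K \<inter> supp (\<gamma> \<phi>)
  where \<gamma> \<phi> accepts the words of B violating \<phi>: by recovery, every formula of K
  already holds on the words of B that satisfy \<phi>.\<close>

lemma suffix_suffix [simp]: "suffix a (suffix b \<pi>) = suffix (b + a) \<pi>"
  by (simp add: suffix_def add.assoc)

lemma suffix_0 [simp]: "suffix 0 \<pi> = \<pi>"
  by (simp add: suffix_def)

lemma suffix_at_0 [simp]: "suffix i \<pi> 0 = \<pi> i"
  by (simp add: suffix_def)

lemma sat_LUntil_unfold:
  "sat \<pi> (LUntil x y) \<longleftrightarrow> sat \<pi> y \<or> (sat \<pi> x \<and> sat (suffix 1 \<pi>) (LUntil x y))"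
proof
  assume "sat \<pi> (LUntil x y)"
  then obtain k where k: "sat (suffix k \<pi>) y" "\<forall>j<k. sat (suffix j \<pi>) x"
    by auto
  show "sat \<pi> y \<or> (sat \<pi> x \<and> sat (suffix 1 \<pi>) (LUntil x y))"
  proof (cases k)
    case 0
    with k show ?thesis by simp
  next
    case (Suc k')
    with k have "sat \<pi> x" by (metis suffix_0 zero_less_Suc)
    moreover from k Suc have "sat (suffix 1 \<pi>) (LUntil x y)"
      by (auto intro!: exI[of _ k'])
    ultimately show ?thesis by simp
  qed
next
  assume "sat \<pi> y \<or> (sat \<pi> x \<and> sat (suffix 1 \<pi>) (LUntil x y))"
  then show "sat \<pi> (LUntil x y)"
  proof
    assume "sat \<pi> y"
    then show ?thesis by (auto intro!: exI[of _ 0])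
  next
    assume x: "sat \<pi> x \<and> sat (suffix 1 \<pi>) (LUntil x y)"
    then obtain k where k: "sat (suffix (Suc k) \<pi>) y" "\<forall>j<k. sat (suffix (Suc j) \<pi>) x"
      by auto
    have "sat (suffix j \<pi>) x" if "j < Suc k" for j
      using x k that by (cases j) auto
    with k show ?thesis by auto
  qed
qed

section \<open>Lassos\<close>

definition loop_index :: "nat \<Rightarrow> nat \<Rightarrow> nat \<Rightarrow> nat" where
  "loop_index i p k = (if k < i then k else i + (k - i) mod p)"

lemma loop_index_less: "0 < p \<Longrightarrow> loop_index i p k < i + p"
  by (simp add: loop_index_def)

lemma loop_index_eq: "k < i + p \<Longrightarrow> loop_index i p k = k"
  by (simp add: loop_index_def)

lemma loop_index_0 [simp]: "loop_index i p 0 = 0"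
  by (simp add: loop_index_def)

lemma loop_index_Suc:
  assumes "0 < p"
  shows "loop_index i p (Suc k) =
    (if Suc (loop_index i p k) = i + p then i else Suc (loop_index i p k))"
proof (cases "k < i")
  case True
  with assms show ?thesis by (auto simp: loop_index_def)
next
  case False
  then have "Suc k - i = Suc (k - i)" by auto
  with False assms show ?thesis by (auto simp: loop_index_def mod_Suc)
qed

lemma loop_index_Suc_loop_index:
  assumes "0 < p"
  shows "loop_index i p (Suc (loop_index i p k)) = loop_index i p (Suc k)"
proof (cases "Suc (loop_index i p k) = i + p")
  case True
  moreover have "loop_index i p (i + p) = i"
    using assms by (simp add: loop_index_def)
  ultimately show ?thesis using loop_index_Suc[OF assms, of i k] by simp
next
  case False
  with loop_index_less[OF assms, of i k] have "Suc (loop_index i p k) < i + p"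
    by simp
  with False show ?thesis using loop_index_Suc[OF assms, of i k] loop_index_eq by simp
qed

lemma loop_index_add_period:
  assumes "i \<le> k"
  shows "loop_index i p (k + p) = loop_index i p k"
proof -
  from assms have "k + p - i = (k - i) + p" by auto
  with assms show ?thesis by (simp add: loop_index_def del: add_diff_assoc2)
qed

lemma loop_index_add_mult:
  assumes "i \<le> t" "t < i + p"
  shows "loop_index i p (t + l * p) = t"
proof -
  from assms have "t + l * p - i = (t - i) + l * p" by auto
  with assms show ?thesis by (simp add: loop_index_def del: add_diff_assoc2)
qed

definition lasso :: "'a trace \<Rightarrow> bool" where
  "lasso w = (\<exists>i p. 0 < p \<and> (\<forall>k\<ge>i. w (k + p) = w k))"

lemma periodic_loop_index:
  assumes p: "0 < p" and periodic: "\<forall>k\<ge>i. w (k + p) = w k"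
  shows "w (loop_index i p k) = w k"
proof (cases "k < i")
  case True
  then show ?thesis by (simp add: loop_index_def)
next
  case False
  have add_mult: "w (r + l * p) = w r" if "i \<le> r" for r l
  proof (induction l)
    case (Suc l)
    have "w (r + Suc l * p) = w ((r + l * p) + p)" by (simp add: algebra_simps)
    also have "\<dots> = w r" using periodic that Suc by simp
    finally show ?case .
  qed simp
  from False have "k = (i + (k - i) mod p) + ((k - i) div p) * p"
    by simp
  then have "w k = w (i + (k - i) mod p)"
    using add_mult[of "i + (k - i) mod p" "(k - i) div p"] by simp
  with False show ?thesis by (simp add: loop_index_def)
qed

text \<open>A lasso is the only trace of the Kripke structure that walks along its stem
  and then around its loop.\<close>

lemma lasso_ktraces:
  assumes "lasso w"
  obtains M where "kripke_wf M" "ktraces M = {w}"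
proof -
  obtain i p where p: "0 < p" and periodic: "\<forall>k\<ge>i. w (k + p) = w k"
    using assms unfolding lasso_def by blast
  define M where "M = \<lparr>kstates = {..<i + p}, kinit = {0},
    ktrans = {(n, loop_index i p (Suc n)) | n. n < i + p}, klabel = w\<rparr>"
  have "kripke_wf M"
    unfolding kripke_wf_def
  proof (intro conjI ballI)
    show "finite (kstates M)" "kinit M \<subseteq> kstates M"
      using p by (simp_all add: M_def)
    show "ktrans M \<subseteq> kstates M \<times> kstates M"
      using loop_index_less[OF p] by (auto simp: M_def)
    show "\<exists>t. (s, t) \<in> ktrans M" if "s \<in> kstates M" for s
      using that by (auto simp: M_def)
  qed
  moreover have "\<pi> \<in> ktraces M \<longleftrightarrow> \<pi> = w" for \<pi>
  proof
    assume "\<pi> \<in> ktraces M"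
    then obtain r where r: "\<pi> = klabel M \<circ> r" "r 0 \<in> kinit M" "\<forall>n. (r n, r (Suc n)) \<in> ktrans M"
      unfolding ktraces_def by blast
    have "r n = loop_index i p n" for n
    proof (induction n)
      case (Suc n)
      from r(3) have "r (Suc n) = loop_index i p (Suc (r n))"
        by (auto simp: M_def)
      with Suc show ?case
        by (simp add: loop_index_Suc_loop_index[OF p])
    qed (use r(2) in \<open>simp add: M_def\<close>)
    with r(1) show "\<pi> = w"
      by (simp add: M_def fun_eq_iff periodic_loop_index[OF p periodic])
  next
    assume "\<pi> = w"
    moreover have "w = klabel M \<circ> loop_index i p"
      by (simp add: M_def fun_eq_iff periodic_loop_index[OF p periodic])
    moreover have "loop_index i p 0 \<in> kinit M"
      by (simp add: M_def)
    moreover have "(loop_index i p n, loop_index i p (Suc n)) \<in> ktrans M" for n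
      by (simp add: M_def loop_index_Suc_loop_index[OF p] loop_index_less[OF p])
    ultimately show "\<pi> \<in> ktraces M"
      unfolding ktraces_def by blast
  qed
  ultimately show ?thesis using that by blast
qed

lemma lasso_sat_Cn:
  assumes "lasso w" "\<forall>\<psi>\<in>X. sat w \<psi>" "\<phi> \<in> Cn X"
  shows "sat w \<phi>"
proof -
  obtain M where M: "kripke_wf M" "ktraces M = {w}"
    using lasso_ktraces[OF assms(1)] .
  with assms(2) have "\<forall>\<psi>\<in>X. kmodels M \<psi>"
    by (simp add: kmodels_def)
  with M assms(3) have "kmodels M \<phi>"
    unfolding Cn_def by blast
  with M show ?thesis by (simp add: kmodels_def)
qed

section \<open>Generalized Buchi automata\<close>

definition gba_lang :: "'s set \<Rightarrow> ('s \<times> 'a set \<times> 's) set \<Rightarrow> 's set list \<Rightarrow> 'a trace set" where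
  "gba_lang I T Fs = {w. \<exists>\<rho>. \<rho> 0 \<in> I \<and> (\<forall>i. (\<rho> i, w i, \<rho> (Suc i)) \<in> T)
      \<and> (\<forall>F\<in>set Fs. \<exists>\<^sub>\<infinity>i. \<rho> i \<in> F)}"

definition finite_gba :: "'s set \<Rightarrow> 's set \<Rightarrow> ('s \<times> 'a set \<times> 's) set \<Rightarrow> bool" where
  "finite_gba S I T = (finite S \<and> I \<subseteq> S \<and> T \<subseteq> S \<times> UNIV \<times> S)"

lemma gba_langE:
  assumes "w \<in> gba_lang I T Fs"
  obtains \<rho> where "\<rho> 0 \<in> I" "\<forall>i. (\<rho> i, w i, \<rho> (Suc i)) \<in> T" "\<forall>F\<in>set Fs. \<exists>\<^sub>\<infinity>i. \<rho> i \<in> F"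
  using assms unfolding gba_lang_def by blast

lemma gba_lang_Cons_UNIV [simp]: "gba_lang I T (UNIV # Fs) = gba_lang I T Fs"
  by (simp add: gba_lang_def)

lemma finite_gba_run_states:
  assumes "finite_gba S I T" "\<rho> 0 \<in> I" "\<forall>i. (\<rho> i, w i, \<rho> (Suc i)) \<in> T"
  shows "\<rho> i \<in> S"
proof (cases i)
  case 0
  with assms(1,2) show ?thesis by (auto simp: finite_gba_def)
next
  case (Suc j)
  with assms(1) assms(3)[rule_format, of j] show ?thesis by (auto simp: finite_gba_def)
qed

lemma gba_lang_inj_rename:
  assumes gba: "finite_gba S I T" and f: "inj_on f S"
  shows "gba_lang (f ` I) {(f s, a, f s') |s a s'. (s, a, s') \<in> T} (map (\<lambda>F. f ` (F \<inter> S)) Fs)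
    = gba_lang I T Fs" (is "gba_lang ?I ?T ?Fs = _")
proof
  show "gba_lang ?I ?T ?Fs \<subseteq> gba_lang I T Fs"
  proof
    fix w assume "w \<in> gba_lang ?I ?T ?Fs"
    then obtain r where r: "r 0 \<in> ?I" "\<forall>i. (r i, w i, r (Suc i)) \<in> ?T"
      "\<forall>F\<in>set Fs. \<exists>\<^sub>\<infinity>i. r i \<in> f ` (F \<inter> S)"
      unfolding gba_lang_def by auto
    define \<rho> where "\<rho> i = inv_into S f (r i)" for i
    have \<rho>: "\<rho> i = s" if "r i = f s" "s \<in> S" for i s
      using that f by (simp add: \<rho>_def)
    have "\<rho> 0 \<in> I"
      using r(1) \<rho> gba by (auto simp: finite_gba_def)
    moreover have "(\<rho> i, w i, \<rho> (Suc i)) \<in> T" for i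
      using r(2)[rule_format, of i] \<rho> gba by (auto simp: finite_gba_def)
    moreover have "\<exists>\<^sub>\<infinity>i. \<rho> i \<in> F" if "F \<in> set Fs" for F
      using r(3)[rule_format, OF that] by (rule INFM_mono) (auto simp: \<rho>)
    ultimately show "w \<in> gba_lang I T Fs"
      unfolding gba_lang_def by blast
  qed
next
  show "gba_lang I T Fs \<subseteq> gba_lang ?I ?T ?Fs"
  proof
    fix w assume "w \<in> gba_lang I T Fs"
    then obtain \<rho> where \<rho>: "\<rho> 0 \<in> I" "\<forall>i. (\<rho> i, w i, \<rho> (Suc i)) \<in> T"
      "\<forall>F\<in>set Fs. \<exists>\<^sub>\<infinity>i. \<rho> i \<in> F"
      by (rule gba_langE)
    have "\<exists>\<^sub>\<infinity>i. f (\<rho> i) \<in> f ` (F \<inter> S)" if "F \<in> set Fs" for F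
      using \<rho>(3)[rule_format, OF that]
      by (rule INFM_mono) (use finite_gba_run_states[OF gba \<rho>(1,2)] in blast)
    with \<rho>(1,2) show "w \<in> gba_lang ?I ?T ?Fs"
      unfolding gba_lang_def by (intro CollectI exI[of _ "f \<circ> \<rho>"]) auto
  qed
qed

lemma buchi_of_finite_gba:
  assumes gba: "finite_gba S I T"
  obtains A where "buchi_wf A" "lang A = gba_lang I T [F]"
proof -
  obtain f :: "_ \<Rightarrow> nat" where f: "inj_on f S"
    using gba finite_imp_inj_to_nat_seg unfolding finite_gba_def by metis
  define A where "A = \<lparr>bstates = f ` S, binit = f ` I,
    btrans = {(f s, a, f s') |s a s'. (s, a, s') \<in> T}, bacc = f ` (F \<inter> S)\<rparr>"
  have "buchi_wf A"
    using gba unfolding A_def buchi_wf_def finite_gba_def by auto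
  moreover have "lang A = gba_lang I T [F]"
    using gba_lang_inj_rename[OF gba f, of "[F]"]
    by (simp add: A_def lang_def gba_lang_def)
  ultimately show ?thesis using that by blast
qed

lemma buchi_UNION:
  fixes A :: "'i::finite \<Rightarrow> 'a buchi"
  assumes wf: "\<And>i. buchi_wf (A i)"
  obtains B where "buchi_wf B" "lang B = (\<Union>i. lang (A i))"
proof -
  define I where "I = Sigma UNIV (\<lambda>i. binit (A i))"
  define T where "T = {((i, q), a, (i, q')) |i q a q'. (q, a, q') \<in> btrans (A i)}"
  define F where "F = Sigma UNIV (\<lambda>i. bacc (A i))"
  have "finite_gba (Sigma UNIV (\<lambda>i. bstates (A i))) I T"
    using wf unfolding finite_gba_def buchi_wf_def I_def T_def by auto
  moreover have "gba_lang I T [F] = (\<Union>i. lang (A i))"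
  proof
    show "gba_lang I T [F] \<subseteq> (\<Union>i. lang (A i))"
    proof
      fix w assume "w \<in> gba_lang I T [F]"
      then obtain \<rho> where \<rho>: "\<rho> 0 \<in> I" "\<forall>t. (\<rho> t, w t, \<rho> (Suc t)) \<in> T" "\<exists>\<^sub>\<infinity>t. \<rho> t \<in> F"
        unfolding gba_lang_def by auto
      define i where "i = fst (\<rho> 0)"
      have "fst (\<rho> (Suc t)) = fst (\<rho> t)" for t
        using \<rho>(2)[rule_format, of t] by (auto simp: T_def)
      then have "fst (\<rho> t) = i" for t
        by (induction t) (simp_all add: i_def)
      then have \<rho>_eq: "\<rho> t = (i, snd (\<rho> t))" for t
        by (metis prod.collapse)
      have "snd (\<rho> 0) \<in> binit (A i)"
        using \<rho>(1) \<rho>_eq[of 0] by (auto simp: I_def)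
      moreover have "(snd (\<rho> t), w t, snd (\<rho> (Suc t))) \<in> btrans (A i)" for t
        using \<rho>(2)[rule_format, of t] \<rho>_eq[of t] \<rho>_eq[of "Suc t"] by (auto simp: T_def)
      moreover have "\<exists>\<^sub>\<infinity>t. snd (\<rho> t) \<in> bacc (A i)"
        using \<rho>(3) by (rule INFM_mono) (subst (asm) \<rho>_eq, simp add: F_def)
      ultimately have "w \<in> lang (A i)"
        unfolding lang_def by (intro CollectI exI[of _ "\<lambda>t. snd (\<rho> t)"]) blast
      then show "w \<in> (\<Union>i. lang (A i))" by blast
    qed
  next
    show "(\<Union>i. lang (A i)) \<subseteq> gba_lang I T [F]"
    proof
      fix w assume "w \<in> (\<Union>i. lang (A i))"
      then obtain i r where "r 0 \<in> binit (A i)" "\<forall>t. (r t, w t, r (Suc t)) \<in> btrans (A i)"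
        "\<exists>\<^sub>\<infinity>t. r t \<in> bacc (A i)"
        unfolding lang_def by auto
      then show "w \<in> gba_lang I T [F]"
        unfolding gba_lang_def I_def T_def F_def
        by (intro CollectI exI[of _ "\<lambda>t. (i, r t)"]) auto
    qed
  qed
  ultimately show ?thesis
    using that buchi_of_finite_gba by metis
qed

lemma lasso_comp_loop_index: "0 < p \<Longrightarrow> lasso (w \<circ> loop_index i p)"
  unfolding lasso_def by (intro exI[of _ i] exI[of _ p]) (simp add: loop_index_add_period)

lemma gba_lang_loop:
  assumes run: "\<rho> 0 \<in> I" "\<forall>t. (\<rho> t, w t, \<rho> (Suc t)) \<in> T"
    and loop: "0 < p" "\<rho> (i + p) = \<rho> i"
    and acc: "\<forall>F\<in>set Fs. \<exists>t. i \<le> t \<and> t < i + p \<and> \<rho> t \<in> F"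
  shows "w \<circ> loop_index i p \<in> gba_lang I T Fs"
proof -
  let ?f = "loop_index i p"
  have "\<rho> (?f (Suc t)) = \<rho> (Suc (?f t))" for t
    using loop by (simp add: loop_index_Suc)
  then have "(\<rho> (?f t), w (?f t), \<rho> (?f (Suc t))) \<in> T" for t
    using run(2) by simp
  moreover have "\<exists>\<^sub>\<infinity>t. \<rho> (?f t) \<in> F" if F: "F \<in> set Fs" for F
    unfolding INFM_nat
  proof
    fix m
    obtain t where t: "i \<le> t" "t < i + p" "\<rho> t \<in> F"
      using acc F by blast
    have "m * 1 \<le> m * p"
      using loop(1) by (intro mult_le_mono2) simp
    then have "m < t + Suc m * p"
      using loop(1) by (simp only: mult_Suc mult_1_right)
    moreover have "?f (t + Suc m * p) = t"
      using loop_index_add_mult[OF t(1,2)] .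
    ultimately show "\<exists>n>m. \<rho> (?f n) \<in> F"
      using t(3) by metis
  qed
  ultimately show ?thesis
    using run(1) unfolding gba_lang_def by (intro CollectI exI[of _ "\<rho> \<circ> ?f"]) simp
qed

text \<open>Pumping: a finite automaton revisits some state infinitely often, so an accepting
  run can be cut into a stem and a loop that passes through every acceptance set.\<close>

lemma gba_lang_has_lasso:
  assumes gba: "finite_gba S I T" and w: "w \<in> gba_lang I T Fs"
  obtains w' where "lasso w'" "w' \<in> gba_lang I T Fs"
proof -
  obtain \<rho> where \<rho>: "\<rho> 0 \<in> I" "\<forall>i. (\<rho> i, w i, \<rho> (Suc i)) \<in> T"
    "\<forall>F\<in>set Fs. \<exists>\<^sub>\<infinity>i. \<rho> i \<in> F"
    using w by (rule gba_langE)
  have "\<exists>\<^sub>\<infinity>i. \<exists>q\<in>S. \<rho> i = q"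
    using finite_gba_run_states[OF gba \<rho>(1,2)] by (simp add: INFM_nat_le)
  then have "\<exists>q\<in>S. \<exists>\<^sub>\<infinity>i. \<rho> i = q"
    using gba by (simp only: finite_gba_def INFM_finite_Bex_distrib)
  then obtain q where "\<exists>\<^sub>\<infinity>i. \<rho> i = q"
    by blast
  then have visits: "\<exists>i>n. \<rho> i = q" for n
    unfolding INFM_nat by blast
  then obtain i where i: "\<rho> i = q" by blast
  have "\<exists>t\<ge>i. \<rho> t \<in> F" if "F \<in> set Fs" for F
    using \<rho>(3) that unfolding INFM_nat_le by blast
  then obtain t where t: "\<And>F. F \<in> set Fs \<Longrightarrow> i \<le> t F \<and> \<rho> (t F) \<in> F"
    by metis
  define n where "n = Max (insert i (t ` set Fs))"
  obtain j where j: "j > n" "\<rho> j = q"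
    using visits by blast
  have n: "i \<le> n" "\<And>F. F \<in> set Fs \<Longrightarrow> t F \<le> n"
    by (simp_all add: n_def)
  have "w \<circ> loop_index i (j - i) \<in> gba_lang I T Fs"
  proof (rule gba_lang_loop[OF \<rho>(1,2)])
    show "0 < j - i" "\<rho> (i + (j - i)) = \<rho> i"
      using n(1) j i by auto
    show "\<forall>F\<in>set Fs. \<exists>t. i \<le> t \<and> t < i + (j - i) \<and> \<rho> t \<in> F"
    proof
      fix F assume "F \<in> set Fs"
      with t n(2) j(1) n(1) show "\<exists>t. i \<le> t \<and> t < i + (j - i) \<and> \<rho> t \<in> F"
        by (intro exI[of _ "t F"]) fastforce
    qed
  qed
  moreover have "lasso (w \<circ> loop_index i (j - i))"
    using n(1) j(1) by (intro lasso_comp_loop_index) simp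
  ultimately show ?thesis using that by blast
qed

text \<open>Degeneralization: a counter modulo the number of acceptance sets waits for the
  acceptance set it points to and then moves on.\<close>

locale cyclic_counter =
  fixes m :: nat and n :: "nat \<Rightarrow> nat" and h :: "nat \<Rightarrow> nat \<Rightarrow> bool"
  assumes n_less: "n t < m"
    and n_Suc: "n (Suc t) = (if h t (n t) then Suc (n t) mod m else n t)"
begin

abbreviation tick :: "nat \<Rightarrow> bool" where
  "tick t \<equiv> h t (n t)"

lemma n_const:
  assumes "t \<le> u" "\<And>v. t \<le> v \<Longrightarrow> v < u \<Longrightarrow> \<not> tick v"
  shows "n u = n t"
  using assms
proof (induction u)
  case (Suc u)
  show ?case
  proof (cases "t = Suc u")
    case False
    with Suc.prems have "n u = n t" "\<not> tick u"
      by (auto intro: Suc.IH)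
    then show ?thesis by (simp add: n_Suc)
  qed simp
qed simp

lemma first_tick:
  assumes "tick u" "t \<le> u"
  shows "\<exists>v\<ge>t. tick v \<and> n v = n t"
proof -
  define v where "v = (LEAST v. t \<le> v \<and> tick v)"
  have v: "t \<le> v" "tick v"
    using LeastI[of "\<lambda>v. t \<le> v \<and> tick v" u] assms by (auto simp: v_def)
  have "\<not> tick x" if "t \<le> x" "x < v" for x
    using not_less_Least[of x "\<lambda>v. t \<le> v \<and> tick v"] that by (auto simp: v_def)
  with v(1) have "n v = n t"
    by (rule n_const)
  with v show ?thesis by blast
qed

lemma tick_reached:
  assumes "h u (n t)" "t \<le> u"
  shows "\<exists>v\<ge>t. tick v \<and> n v = n t"
proof (cases "\<exists>v. t \<le> v \<and> v < u \<and> tick v")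
  case True
  then show ?thesis using first_tick by auto
next
  case False
  then have "n u = n t"
    using assms(2) by (intro n_const) auto
  with assms show ?thesis by auto
qed

lemma ticks_cycle:
  assumes ticks: "\<exists>\<^sub>\<infinity>t. tick t" and k: "k < m"
  shows "\<exists>\<^sub>\<infinity>t. n t = k \<and> h t k"
  unfolding INFM_nat_le
proof
  fix N
  have next_tick: "\<exists>v\<ge>t. tick v \<and> n v = n t" for t
    using ticks first_tick unfolding INFM_nat_le by blast
  have "\<exists>t\<ge>N. n t = (n N + d) mod m" for d
  proof (induction d)
    case 0
    then show ?case using n_less by auto
  next
    case (Suc d)
    then obtain t where t: "t \<ge> N" "n t = (n N + d) mod m"
      by blast
    obtain v where "v \<ge> t" "tick v" "n v = n t"
      using next_tick by blast
    with t show ?case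
      by (intro exI[of _ "Suc v"]) (simp add: n_Suc mod_Suc_eq)
  qed
  from this[of "m - n N + k"] obtain t where t: "t \<ge> N" "n t = k"
    using n_less[of N] k by auto
  obtain v where "v \<ge> t" "tick v" "n v = n t"
    using next_tick by blast
  with t show "\<exists>t\<ge>N. n t = k \<and> h t k"
    by (intro exI[of _ v]) simp
qed

lemma INFM_tick_iff_all: "(\<exists>\<^sub>\<infinity>t. tick t) \<longleftrightarrow> (\<forall>k<m. \<exists>\<^sub>\<infinity>t. h t k)"
proof
  assume "\<exists>\<^sub>\<infinity>t. tick t"
  then show "\<forall>k<m. \<exists>\<^sub>\<infinity>t. h t k"
    using ticks_cycle by (blast intro: INFM_mono)
next
  assume "\<forall>k<m. \<exists>\<^sub>\<infinity>t. h t k"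
  then have "\<exists>u\<ge>t. h u (n t)" for t
    using n_less unfolding INFM_nat_le by blast
  then show "\<exists>\<^sub>\<infinity>t. tick t"
    unfolding INFM_nat_le using tick_reached by blast
qed

lemma INFM_tick_iff_0: "0 < m \<Longrightarrow> (\<exists>\<^sub>\<infinity>t. tick t) \<longleftrightarrow> (\<exists>\<^sub>\<infinity>t. n t = 0 \<and> h t 0)"
  using ticks_cycle by (auto elim: INFM_mono)

end

definition counter_trans ::
  "('s \<times> 'a set \<times> 's) set \<Rightarrow> 's set list \<Rightarrow> (('s \<times> nat) \<times> 'a set \<times> ('s \<times> nat)) set" where
  "counter_trans T Fs = {((s, k), a, (s', k')) |s k a s' k'. (s, a, s') \<in> T \<and> k < length Fs
     \<and> k' = (if s \<in> Fs ! k then Suc k mod length Fs else k)}"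

lemma gba_lang_counter_trans:
  assumes "Fs \<noteq> []"
  shows "gba_lang (I \<times> {0}) (counter_trans T Fs) [Fs ! 0 \<times> {0}] = gba_lang I T Fs"
proof
  show "gba_lang (I \<times> {0}) (counter_trans T Fs) [Fs ! 0 \<times> {0}] \<subseteq> gba_lang I T Fs"
  proof
    fix w assume "w \<in> gba_lang (I \<times> {0}) (counter_trans T Fs) [Fs ! 0 \<times> {0}]"
    then obtain \<rho> where \<rho>: "\<rho> 0 \<in> I \<times> {0}" "\<forall>t. (\<rho> t, w t, \<rho> (Suc t)) \<in> counter_trans T Fs"
      "\<forall>F\<in>set [Fs ! 0 \<times> {0}]. \<exists>\<^sub>\<infinity>t. \<rho> t \<in> F"
      by (rule gba_langE)
    define s where "s t = fst (\<rho> t)" for t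
    define n where "n t = snd (\<rho> t)" for t
    have \<rho>_eq: "\<rho> t = (s t, n t)" for t by (simp add: s_def n_def)
    have step: "(s t, w t, s (Suc t)) \<in> T" "n t < length Fs"
      "n (Suc t) = (if s t \<in> Fs ! n t then Suc (n t) mod length Fs else n t)" for t
      using \<rho>(2)[rule_format, of t] unfolding \<rho>_eq counter_trans_def by auto
    interpret cyclic_counter "length Fs" n "\<lambda>t k. s t \<in> Fs ! k"
      using step by unfold_locales
    have "\<exists>\<^sub>\<infinity>t. n t = 0 \<and> s t \<in> Fs ! 0"
      using \<rho>(3)[simplified] by (rule INFM_mono) (simp add: \<rho>_eq)
    then have "\<forall>k<length Fs. \<exists>\<^sub>\<infinity>t. s t \<in> Fs ! k"
      using assms INFM_tick_iff_0 INFM_tick_iff_all by blast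
    then have "\<forall>F\<in>set Fs. \<exists>\<^sub>\<infinity>t. s t \<in> F"
      by (metis in_set_conv_nth)
    moreover have "s 0 \<in> I"
      using \<rho>(1) by (simp add: \<rho>_eq)
    ultimately show "w \<in> gba_lang I T Fs"
      unfolding gba_lang_def using step(1) by blast
  qed
next
  show "gba_lang I T Fs \<subseteq> gba_lang (I \<times> {0}) (counter_trans T Fs) [Fs ! 0 \<times> {0}]"
  proof
    fix w assume "w \<in> gba_lang I T Fs"
    then obtain s where s: "s 0 \<in> I" "\<forall>t. (s t, w t, s (Suc t)) \<in> T"
      "\<forall>F\<in>set Fs. \<exists>\<^sub>\<infinity>t. s t \<in> F"
      by (rule gba_langE)
    define n where "n = rec_nat 0 (\<lambda>t k. if s t \<in> Fs ! k then Suc k mod length Fs else k)"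
    have n_Suc: "n (Suc t) = (if s t \<in> Fs ! n t then Suc (n t) mod length Fs else n t)" for t
      by (simp add: n_def)
    have n_less: "n t < length Fs" for t
      by (induction t) (use assms in \<open>simp_all add: n_def\<close>)
    interpret cyclic_counter "length Fs" n "\<lambda>t k. s t \<in> Fs ! k"
      using n_less n_Suc by unfold_locales
    have "\<forall>k<length Fs. \<exists>\<^sub>\<infinity>t. s t \<in> Fs ! k"
      using s(3) by simp
    then have "\<exists>\<^sub>\<infinity>t. n t = 0 \<and> s t \<in> Fs ! 0"
      using assms INFM_tick_iff_0 INFM_tick_iff_all by blast
    then have "\<exists>\<^sub>\<infinity>t. (s t, n t) \<in> Fs ! 0 \<times> {0}"
      by (rule INFM_mono) simp
    moreover have "((s t, n t), w t, (s (Suc t), n (Suc t))) \<in> counter_trans T Fs" for t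
      using s(2) n_less n_Suc unfolding counter_trans_def by simp
    ultimately show "w \<in> gba_lang (I \<times> {0}) (counter_trans T Fs) [Fs ! 0 \<times> {0}]"
      unfolding gba_lang_def using s(1) by (intro CollectI exI[of _ "\<lambda>t. (s t, n t)"]) (simp add: n_def)
  qed
qed

lemma buchi_of_gba:
  assumes gba: "finite_gba S I T"
  obtains A where "buchi_wf A" "lang A = gba_lang I T Fs"
proof -
  let ?Gs = "UNIV # Fs"
  have "finite_gba (S \<times> {..<length ?Gs}) (I \<times> {0}) (counter_trans T ?Gs)"
    using gba unfolding finite_gba_def counter_trans_def by auto
  then obtain A where "buchi_wf A" "lang A = gba_lang (I \<times> {0}) (counter_trans T ?Gs) [?Gs ! 0 \<times> {0}]"
    by (rule buchi_of_finite_gba)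
  with that show ?thesis
    using gba_lang_counter_trans[of ?Gs I T] by simp
qed

section \<open>The tableau of an LTL formula\<close>

fun subformula_list :: "'a ltl \<Rightarrow> 'a ltl list" where
  "subformula_list LBot = [LBot]"
| "subformula_list (LProp p) = [LProp p]"
| "subformula_list (LNeg a) = LNeg a # subformula_list a"
| "subformula_list (LOr a b) = LOr a b # subformula_list a @ subformula_list b"
| "subformula_list (LNext a) = LNext a # subformula_list a"
| "subformula_list (LUntil a b) = LUntil a b # subformula_list a @ subformula_list b"

definition subformulas :: "'a ltl \<Rightarrow> 'a ltl set" where
  "subformulas \<chi> = set (subformula_list \<chi>)"

lemma subformulas_self [simp]: "\<chi> \<in> subformulas \<chi>"
  by (cases \<chi>) (auto simp: subformulas_def)

lemma finite_subformulas [simp]: "finite (subformulas \<chi>)"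
  by (simp add: subformulas_def)

lemma subformulas_trans: "\<psi> \<in> subformulas \<chi> \<Longrightarrow> subformulas \<psi> \<subseteq> subformulas \<chi>"
  by (induction \<chi>) (auto simp: subformulas_def)

lemma subformulas_closed:
  "LNeg a \<in> subformulas \<chi> \<Longrightarrow> a \<in> subformulas \<chi>"
  "LOr a b \<in> subformulas \<chi> \<Longrightarrow> a \<in> subformulas \<chi>"
  "LOr a b \<in> subformulas \<chi> \<Longrightarrow> b \<in> subformulas \<chi>"
  "LNext a \<in> subformulas \<chi> \<Longrightarrow> a \<in> subformulas \<chi>"
  "LUntil a b \<in> subformulas \<chi> \<Longrightarrow> a \<in> subformulas \<chi>"
  "LUntil a b \<in> subformulas \<chi> \<Longrightarrow> b \<in> subformulas \<chi>"
  using subformulas_trans[of "LNeg a" \<chi>] subformulas_trans[of "LOr a b" \<chi>]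
    subformulas_trans[of "LNext a" \<chi>] subformulas_trans[of "LUntil a b" \<chi>]
    subformulas_self[of a] subformulas_self[of b]
  by (auto simp: subformulas_def)

text \<open>A tableau state is the set of subformulas claimed to hold at the current position;
  the step relation checks these claims against the current letter and the next state.\<close>

fun tableau_step :: "'a ltl \<Rightarrow> 'a ltl set \<Rightarrow> 'a set \<Rightarrow> 'a ltl set \<Rightarrow> bool" where
  "tableau_step LBot T a T' = False"
| "tableau_step (LProp p) T a T' = (p \<in> a)"
| "tableau_step (LNeg x) T a T' = (x \<notin> T)"
| "tableau_step (LOr x y) T a T' = (x \<in> T \<or> y \<in> T)"
| "tableau_step (LNext x) T a T' = (x \<in> T')"
| "tableau_step (LUntil x y) T a T' = (y \<in> T \<or> (x \<in> T \<and> LUntil x y \<in> T'))"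

fun fulfilled :: "'a ltl \<Rightarrow> 'a ltl set \<Rightarrow> bool" where
  "fulfilled (LUntil x y) T = (LUntil x y \<notin> T \<or> y \<in> T)"
| "fulfilled _ T = True"

text \<open>The local unfolding of an until only pins it down as a fixpoint; fulfilling it
  infinitely often selects the least one.\<close>

lemma until_least_fixpoint:
  assumes unfold: "\<And>n. u n \<longleftrightarrow> b n \<or> (a n \<and> u (Suc n))"
    and fulfil: "\<exists>\<^sub>\<infinity>n. \<not> u n \<or> b n"
  shows "u i \<longleftrightarrow> (\<exists>k. b (i + k) \<and> (\<forall>j<k. a (i + j)))"
proof
  assume u: "u i"
  obtain n where "n \<ge> i" "\<not> u n \<or> b n"
    using fulfil unfolding INFM_nat_le by blast
  then have ex: "\<not> u (i + (n - i)) \<or> b (i + (n - i))" by simp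
  define k where "k = (LEAST d. \<not> u (i + d) \<or> b (i + d))"
  have k: "\<not> u (i + k) \<or> b (i + k)"
    unfolding k_def by (rule LeastI[of "\<lambda>d. \<not> u (i + d) \<or> b (i + d)", OF ex])
  have before: "u (i + d) \<and> \<not> b (i + d)" if "d < k" for d
    using not_less_Least[of d "\<lambda>d. \<not> u (i + d) \<or> b (i + d)"] that unfolding k_def by blast
  have "u (i + d)" if "d \<le> k" for d
    using that
  proof (induction d)
    case (Suc d)
    with before[of d] unfold[of "i + d"] show ?case by auto
  qed (simp add: u)
  with k have "b (i + k)" by blast
  moreover have "a (i + j)" if "j < k" for j
    using before[OF that] unfold[of "i + j"] by auto
  ultimately show "\<exists>k. b (i + k) \<and> (\<forall>j<k. a (i + j))" by blast
next
  assume "\<exists>k. b (i + k) \<and> (\<forall>j<k. a (i + j))"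
  then obtain k where "b (i + k)" "\<forall>j<k. a (i + j)" by blast
  then show "u i"
  proof (induction k arbitrary: i)
    case 0
    then show ?case using unfold[of i] by simp
  next
    case (Suc k)
    have "\<forall>j<k. a (Suc i + j)"
      using Suc.prems(2) by auto
    then have "u (Suc i)"
      using Suc.IH[of "Suc i"] Suc.prems(1) by simp
    moreover have "a i"
      using Suc.prems(2) by (metis add_0_right zero_less_Suc)
    ultimately show ?case
      using unfold[of i] by blast
  qed
qed

lemma tableau_sequence_sound:
  assumes step: "\<And>\<psi> i. \<psi> \<in> subformulas \<chi> \<Longrightarrow> \<psi> \<in> T i \<longleftrightarrow> tableau_step \<psi> (T i) (w i) (T (Suc i))"
    and fulfil: "\<And>\<psi>. \<psi> \<in> subformulas \<chi> \<Longrightarrow> \<exists>\<^sub>\<infinity>i. fulfilled \<psi> (T i)"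
  shows "\<psi> \<in> subformulas \<chi> \<Longrightarrow> \<psi> \<in> T i \<longleftrightarrow> sat (suffix i w) \<psi>"
proof (induction \<psi> arbitrary: i)
  case (LUntil x y)
  note sub = subformulas_closed(5,6)[OF LUntil.prems]
  have "LUntil x y \<in> T i \<longleftrightarrow> (\<exists>k. y \<in> T (i + k) \<and> (\<forall>j<k. x \<in> T (i + j)))"
  proof (rule until_least_fixpoint)
    show "LUntil x y \<in> T n \<longleftrightarrow> y \<in> T n \<or> (x \<in> T n \<and> LUntil x y \<in> T (Suc n))" for n
      using step[OF LUntil.prems, of n] by simp
    show "\<exists>\<^sub>\<infinity>n. LUntil x y \<notin> T n \<or> y \<in> T n"
      using fulfil[OF LUntil.prems] by simp
  qed
  also have "\<dots> \<longleftrightarrow> (\<exists>k. sat (suffix (i + k) w) y \<and> (\<forall>j<k. sat (suffix (i + j) w) x))"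
    using LUntil.IH sub by simp
  finally show ?case by simp
next
  case (LNeg x)
  then show ?case using step[OF LNeg.prems, of i] subformulas_closed(1)[OF LNeg.prems] by simp
next
  case (LOr x y)
  then show ?case using step[OF LOr.prems, of i] subformulas_closed(2,3)[OF LOr.prems] by simp
next
  case (LNext x)
  then show ?case using step[OF LNext.prems, of i] subformulas_closed(4)[OF LNext.prems] by simp
qed (use step in simp_all)

lemma tableau_sequence_complete:
  fixes \<chi> :: "'a ltl" and w :: "'a trace"
  defines "T \<equiv> \<lambda>i. {\<psi> \<in> subformulas \<chi>. sat (suffix i w) \<psi>}"
  shows "\<And>\<psi> i. \<psi> \<in> subformulas \<chi> \<Longrightarrow> \<psi> \<in> T i \<longleftrightarrow> tableau_step \<psi> (T i) (w i) (T (Suc i))"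
    and "\<And>\<psi>. \<psi> \<in> subformulas \<chi> \<Longrightarrow> \<exists>\<^sub>\<infinity>i. fulfilled \<psi> (T i)"
proof -
  fix \<psi> i assume \<psi>: "\<psi> \<in> subformulas \<chi>"
  then show "\<psi> \<in> T i \<longleftrightarrow> tableau_step \<psi> (T i) (w i) (T (Suc i))"
  proof (cases \<psi>)
    case (LUntil x y)
    with \<psi> show ?thesis
      using subformulas_closed(5,6)[of x y \<chi>] sat_LUntil_unfold[of "suffix i w" x y]
      by (simp add: T_def)
  next
    case (LNeg x)
    with \<psi> show ?thesis using subformulas_closed(1)[of x \<chi>] by (auto simp: T_def)
  next
    case (LOr x y)
    with \<psi> show ?thesis using subformulas_closed(2,3)[of x y \<chi>] by (auto simp: T_def)
  next
    case (LNext x)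
    with \<psi> show ?thesis using subformulas_closed(4)[of x \<chi>] by (auto simp: T_def)
  qed (auto simp: T_def)
next
  fix \<psi> assume \<psi>: "\<psi> \<in> subformulas \<chi>"
  show "\<exists>\<^sub>\<infinity>i. fulfilled \<psi> (T i)"
  proof (cases \<psi>)
    case (LUntil x y)
    have "\<exists>n\<ge>N. LUntil x y \<notin> T n \<or> y \<in> T n" for N
    proof (cases "sat (suffix N w) \<psi>")
      case True
      then obtain k where "sat (suffix (N + k) w) y"
        using LUntil by auto
      moreover have "y \<in> subformulas \<chi>"
        using \<psi> LUntil subformulas_closed(6) by blast
      ultimately show ?thesis
        by (intro exI[of _ "N + k"]) (simp add: T_def)
    next
      case False
      with LUntil show ?thesis
        by (intro exI[of _ N]) (simp add: T_def del: sat.simps)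
    qed
    with LUntil show ?thesis
      unfolding INFM_nat_le by simp
  qed simp_all
qed

definition tableau_init :: "'a buchi \<Rightarrow> 'a ltl \<Rightarrow> (nat \<times> 'a ltl set) set" where
  "tableau_init B \<chi> = {(q, T). q \<in> binit B \<and> T \<subseteq> subformulas \<chi> \<and> \<chi> \<in> T}"

definition tableau_trans ::
  "'a buchi \<Rightarrow> 'a ltl \<Rightarrow> ((nat \<times> 'a ltl set) \<times> 'a set \<times> (nat \<times> 'a ltl set)) set" where
  "tableau_trans B \<chi> = {((q, T), a, (q', T')). (q, a, q') \<in> btrans B
     \<and> T \<subseteq> subformulas \<chi> \<and> T' \<subseteq> subformulas \<chi>
     \<and> (\<forall>\<psi>\<in>subformulas \<chi>. \<psi> \<in> T \<longleftrightarrow> tableau_step \<psi> T a T')}"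

definition tableau_acc :: "'a buchi \<Rightarrow> 'a ltl \<Rightarrow> (nat \<times> 'a ltl set) set list" where
  "tableau_acc B \<chi> = {(q, T). q \<in> bacc B} # map (\<lambda>\<psi>. {(q, T). fulfilled \<psi> T}) (subformula_list \<chi>)"

lemma finite_gba_tableau:
  "buchi_wf B \<Longrightarrow> finite_gba (bstates B \<times> Pow (subformulas \<chi>)) (tableau_init B \<chi>) (tableau_trans B \<chi>)"
  unfolding finite_gba_def buchi_wf_def tableau_init_def tableau_trans_def by auto

lemma gba_lang_tableau_subset:
  "gba_lang (tableau_init B \<chi>) (tableau_trans B \<chi>) (tableau_acc B \<chi>) \<subseteq> lang B \<inter> {w. sat w \<chi>}"
proof
  fix w assume "w \<in> gba_lang (tableau_init B \<chi>) (tableau_trans B \<chi>) (tableau_acc B \<chi>)"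
  then obtain \<rho> where \<rho>: "\<rho> 0 \<in> tableau_init B \<chi>" "\<forall>i. (\<rho> i, w i, \<rho> (Suc i)) \<in> tableau_trans B \<chi>"
    "\<forall>F\<in>set (tableau_acc B \<chi>). \<exists>\<^sub>\<infinity>i. \<rho> i \<in> F"
    by (rule gba_langE)
  have step: "\<psi> \<in> snd (\<rho> i) \<longleftrightarrow> tableau_step \<psi> (snd (\<rho> i)) (w i) (snd (\<rho> (Suc i)))"
    if "\<psi> \<in> subformulas \<chi>" for \<psi> i
    using \<rho>(2)[rule_format, of i] that by (auto simp: tableau_trans_def split: prod.splits)
  moreover have fulfil: "\<exists>\<^sub>\<infinity>i. fulfilled \<psi> (snd (\<rho> i))" if "\<psi> \<in> subformulas \<chi>" for \<psi>
  proof -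
    have "{(q, T). fulfilled \<psi> T} \<in> set (tableau_acc B \<chi>)"
      using that by (simp add: tableau_acc_def subformulas_def)
    then show ?thesis
      using \<rho>(3) by (auto simp: case_prod_beta)
  qed
  have "\<chi> \<in> snd (\<rho> 0) \<longleftrightarrow> sat (suffix 0 w) \<chi>"
    by (rule tableau_sequence_sound[where \<chi>=\<chi>, OF step fulfil subformulas_self])
  moreover have "\<chi> \<in> snd (\<rho> 0)"
    using \<rho>(1) by (auto simp: tableau_init_def)
  ultimately have "sat w \<chi>" by simp
  have "fst (\<rho> 0) \<in> binit B"
    using \<rho>(1) by (auto simp: tableau_init_def)
  moreover have "(fst (\<rho> i), w i, fst (\<rho> (Suc i))) \<in> btrans B" for i
    using \<rho>(2)[rule_format, of i] by (auto simp: tableau_trans_def split: prod.splits)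
  moreover have "\<exists>\<^sub>\<infinity>i. fst (\<rho> i) \<in> bacc B"
    using \<rho>(3) by (simp add: tableau_acc_def case_prod_beta)
  ultimately have "w \<in> lang B"
    unfolding lang_def by (intro CollectI exI[of _ "\<lambda>i. fst (\<rho> i)"]) blast
  with \<open>sat w \<chi>\<close> show "w \<in> lang B \<inter> {w. sat w \<chi>}" by blast
qed

lemma gba_lang_tableau_supset:
  "lang B \<inter> {w. sat w \<chi>} \<subseteq> gba_lang (tableau_init B \<chi>) (tableau_trans B \<chi>) (tableau_acc B \<chi>)"
proof
  fix w assume w: "w \<in> lang B \<inter> {w. sat w \<chi>}"
  then obtain r where r: "r 0 \<in> binit B" "\<forall>i. (r i, w i, r (Suc i)) \<in> btrans B"
    "\<exists>\<^sub>\<infinity>i. r i \<in> bacc B"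
    unfolding lang_def by blast
  define T where "T i = {\<psi> \<in> subformulas \<chi>. sat (suffix i w) \<psi>}" for i
  note T_step = tableau_sequence_complete(1)[where \<chi>=\<chi> and w=w, folded T_def]
  note T_fulfil = tableau_sequence_complete(2)[where \<chi>=\<chi> and w=w, folded T_def]
  have "(r 0, T 0) \<in> tableau_init B \<chi>"
    using r(1) w by (simp add: tableau_init_def T_def)
  moreover have "((r i, T i), w i, (r (Suc i), T (Suc i))) \<in> tableau_trans B \<chi>" for i
  proof -
    have "T j \<subseteq> subformulas \<chi>" for j
      by (auto simp: T_def)
    with r(2) T_step show ?thesis
      by (simp add: tableau_trans_def)
  qed
  moreover have "\<exists>\<^sub>\<infinity>i. (r i, T i) \<in> F" if F: "F \<in> set (tableau_acc B \<chi>)" for F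
  proof -
    consider "F = {(q, T). q \<in> bacc B}"
      | \<psi> where "\<psi> \<in> subformulas \<chi>" "F = {(q, T). fulfilled \<psi> T}"
      using F by (auto simp: tableau_acc_def subformulas_def)
    then show ?thesis
    proof cases
      case 1
      with r(3) show ?thesis by simp
    next
      case 2
      with T_fulfil show ?thesis by simp
    qed
  qed
  ultimately show "w \<in> gba_lang (tableau_init B \<chi>) (tableau_trans B \<chi>) (tableau_acc B \<chi>)"
    unfolding gba_lang_def by (intro CollectI exI[of _ "\<lambda>i. (r i, T i)"]) simp
qed

lemma gba_lang_tableau:
  "gba_lang (tableau_init B \<chi>) (tableau_trans B \<chi>) (tableau_acc B \<chi>) = lang B \<inter> {w. sat w \<chi>}"
  using gba_lang_tableau_subset gba_lang_tableau_supset by blast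

lemma buchi_inter_sat:
  assumes "buchi_wf B"
  shows "\<exists>C. buchi_wf C \<and> lang C = lang B \<inter> {w. sat w \<chi>}"
proof -
  obtain C where "buchi_wf C"
    "lang C = gba_lang (tableau_init B \<chi>) (tableau_trans B \<chi>) (tableau_acc B \<chi>)"
    by (rule buchi_of_gba[OF finite_gba_tableau[OF assms]])
  then show ?thesis
    unfolding gba_lang_tableau by blast
qed

lemma lang_sat_has_lasso:
  assumes "buchi_wf B" "w \<in> lang B" "sat w \<chi>"
  obtains w' where "lasso w'" "w' \<in> lang B" "sat w' \<chi>"
proof -
  have "w \<in> gba_lang (tableau_init B \<chi>) (tableau_trans B \<chi>) (tableau_acc B \<chi>)"
    using assms(2,3) unfolding gba_lang_tableau by blast
  then obtain w' where "lasso w'"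
    "w' \<in> gba_lang (tableau_init B \<chi>) (tableau_trans B \<chi>) (tableau_acc B \<chi>)"
    by (rule gba_lang_has_lasso[OF finite_gba_tableau[OF assms(1)]])
  with that show ?thesis
    unfolding gba_lang_tableau by blast
qed

section \<open>Consequence and supports of Buchi automata\<close>

definition buchi_univ :: "'a buchi" where
  "buchi_univ = \<lparr>bstates = {0}, binit = {0}, btrans = {(0, a, 0) |a. True}, bacc = {0}\<rparr>"

lemma buchi_wf_univ: "buchi_wf buchi_univ"
  by (auto simp: buchi_univ_def buchi_wf_def)

lemma lang_buchi_univ [simp]: "lang buchi_univ = UNIV"
  unfolding lang_def buchi_univ_def by (auto intro!: exI[of _ "\<lambda>_. 0"])

definition buchi_restrict :: "'a buchi \<Rightarrow> 'a ltl \<Rightarrow> 'a buchi" where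
  "buchi_restrict B \<chi> = (SOME C. buchi_wf C \<and> lang C = lang B \<inter> {w. sat w \<chi>})"

lemma
  assumes "buchi_wf B"
  shows buchi_wf_restrict: "buchi_wf (buchi_restrict B \<chi>)"
    and lang_buchi_restrict: "lang (buchi_restrict B \<chi>) = lang B \<inter> {w. sat w \<chi>}"
  using someI_ex[OF buchi_inter_sat[OF assms]] unfolding buchi_restrict_def by blast+

lemma Cn_increasing: "X \<subseteq> Cn X"
  by (auto simp: Cn_def)

lemma supp_antimono: "lang A \<subseteq> lang B \<Longrightarrow> supp B \<subseteq> supp A"
  unfolding supp_def by blast

lemma Cn_subset_supp:
  assumes B: "buchi_wf B" and X: "X \<subseteq> supp B"
  shows "Cn X \<subseteq> supp B"
proof
  fix \<phi> assume \<phi>: "\<phi> \<in> Cn X"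
  show "\<phi> \<in> supp B"
    unfolding supp_def
  proof (rule CollectI, rule ballI, rule ccontr)
    fix \<pi> assume "\<pi> \<in> lang B" "\<not> sat \<pi> \<phi>"
    then obtain w where w: "lasso w" "w \<in> lang B" "sat w (LNeg \<phi>)"
      using lang_sat_has_lasso[OF B, of \<pi> "LNeg \<phi>"] by auto
    with X have "\<forall>\<psi>\<in>X. sat w \<psi>"
      by (auto simp: supp_def)
    then have "sat w \<phi>"
      using w(1) \<phi> by (intro lasso_sat_Cn)
    with w(3) show False by simp
  qed
qed

lemma Cn_supp: "buchi_wf B \<Longrightarrow> Cn (supp B) = supp B"
  using Cn_subset_supp Cn_increasing by blast

lemma Cn_E_Buchi: "X \<in> E_Buchi \<Longrightarrow> Cn X = X"
  using Cn_supp unfolding E_Buchi_def by blast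

lemma Cn_empty_iff_tautology: "\<phi> \<in> Cn {} \<longleftrightarrow> tautology \<phi>"
proof
  assume "\<phi> \<in> Cn {}"
  then have "\<phi> \<in> supp buchi_univ"
    using Cn_subset_supp[OF buchi_wf_univ] by blast
  then show "tautology \<phi>"
    by (simp add: supp_def tautology_def)
qed (simp add: Cn_def kmodels_def tautology_def)

lemma ltl_equiv_sat:
  assumes "ltl_equiv \<phi> \<psi>"
  shows "sat \<pi> \<phi> \<longleftrightarrow> sat \<pi> \<psi>"
proof -
  have "sat \<pi> \<beta>" if "ltl_equiv \<alpha> \<beta>" "sat \<pi> \<alpha>" for \<alpha> \<beta> :: "'a ltl"
  proof -
    have "\<beta> \<in> Cn {\<alpha>}"
      using that(1) Cn_increasing[of "{\<beta>}"] by (auto simp: ltl_equiv_def)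
    also have "\<dots> \<subseteq> supp (buchi_restrict buchi_univ \<alpha>)"
      by (rule Cn_subset_supp)
        (auto simp: buchi_wf_restrict buchi_wf_univ lang_buchi_restrict supp_def)
    finally show ?thesis
      using that(2) by (auto simp: supp_def lang_buchi_restrict buchi_wf_univ)
  qed
  moreover from assms have "ltl_equiv \<psi> \<phi>"
    by (simp add: ltl_equiv_def)
  ultimately show ?thesis
    using assms by blast
qed

lemma ltl_equiv_supp: "ltl_equiv \<phi> \<psi> \<Longrightarrow> \<phi> \<in> supp B \<longleftrightarrow> \<psi> \<in> supp B"
  by (simp add: supp_def ltl_equiv_sat)

lemma ltl_equiv_tautology: "ltl_equiv \<phi> \<psi> \<Longrightarrow> tautology \<phi> \<longleftrightarrow> tautology \<psi>"
  by (simp add: tautology_def ltl_equiv_sat)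

lemma Cn_Un_tautology: "\<phi> \<in> Cn {} \<Longrightarrow> Cn (X \<union> {\<phi>}) \<subseteq> Cn X"
  unfolding Cn_def by auto

lemma Cn_modus_ponens: "LOr (LNeg \<phi>) \<psi> \<in> X \<Longrightarrow> \<psi> \<in> Cn (X \<union> {\<phi>})"
  unfolding Cn_def kmodels_def by auto

lemma E_Buchi_Int:
  assumes "X \<in> E_Buchi" "Y \<in> E_Buchi"
  shows "X \<inter> Y \<in> E_Buchi"
proof -
  obtain A B where A: "buchi_wf A" "X = supp A" and B: "buchi_wf B" "Y = supp B"
    using assms unfolding E_Buchi_def by blast
  have "buchi_wf (if b then A else B)" for b
    using A B by simp
  then obtain C where C: "buchi_wf C" "lang C = (\<Union>b. lang (if b then A else B))"
    by (rule buchi_UNION)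
  have "lang C = lang A \<union> lang B"
    unfolding C(2) by (auto split: if_splits)
  then have "X \<inter> Y = supp C"
    using A B by (auto simp: supp_def)
  with C(1) show ?thesis
    unfolding E_Buchi_def by blast
qed

lemma buchi_contraction_remains_in_E_Buchi:
  assumes "K \<in> E_Buchi" "buchi_choice \<gamma>"
  shows "remains_in_E_Buchi (buchi_contraction K \<gamma>)"
  unfolding remains_in_E_Buchi_def
proof
  fix \<phi>
  have "supp (\<gamma> \<phi>) \<in> E_Buchi"
    using assms(2) unfolding buchi_choice_def E_Buchi_def by blast
  with assms(1) show "buchi_contraction K \<gamma> \<phi> \<in> E_Buchi"
    unfolding buchi_contraction_def using E_Buchi_Int by auto
qed

lemma buchi_contraction_rational:
  assumes K: "K \<in> E_Buchi" and \<gamma>: "buchi_choice \<gamma>"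
  shows "rational_contraction K (buchi_contraction K \<gamma>)"
proof -
  let ?c = "buchi_contraction K \<gamma>"
  obtain A where A: "K = supp A"
    using K unfolding E_Buchi_def by blast
  have nonempty: "lang (\<gamma> \<phi>) \<noteq> {}"
    and refutes: "\<not> tautology \<phi> \<Longrightarrow> LNeg \<phi> \<in> supp (\<gamma> \<phi>)"
    and congruent: "ltl_equiv \<phi> \<psi> \<Longrightarrow> lang (\<gamma> \<phi>) = lang (\<gamma> \<psi>)" for \<phi> \<psi>
    using \<gamma> unfolding buchi_choice_def by blast+
  have "?c \<phi> = Cn (?c \<phi>)" for \<phi>
    using buchi_contraction_remains_in_E_Buchi[OF K \<gamma>] Cn_E_Buchi
    unfolding remains_in_E_Buchi_def by metis
  moreover have "\<phi> \<notin> ?c \<phi>" if "\<phi> \<notin> Cn {}" for \<phi>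
  proof -
    obtain \<pi> where "\<pi> \<in> lang (\<gamma> \<phi>)"
      using nonempty by blast
    moreover have "\<not> tautology \<phi>"
      using that Cn_empty_iff_tautology by blast
    ultimately have "\<phi> \<notin> supp (\<gamma> \<phi>)"
      using refutes unfolding supp_def by auto
    with that show ?thesis
      by (simp add: buchi_contraction_def)
  qed
  moreover have "K \<subseteq> expansion (?c \<phi>) \<phi>" for \<phi>
  proof (cases "\<phi> \<notin> Cn {} \<and> \<phi> \<in> K")
    case True
    then have "LNeg \<phi> \<in> supp (\<gamma> \<phi>)"
      using refutes Cn_empty_iff_tautology by blast
    with A True have "LOr (LNeg \<phi>) \<psi> \<in> ?c \<phi>" if "\<psi> \<in> K" for \<psi>
      using that by (simp add: buchi_contraction_def supp_def)
    then show ?thesis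
      unfolding expansion_def using Cn_modus_ponens by blast
  next
    case False
    then show ?thesis
      using Cn_increasing[of "K \<union> {\<phi>}"] by (auto simp: buchi_contraction_def expansion_def)
  qed
  moreover have "?c \<phi> = ?c \<psi>" if "ltl_equiv \<phi> \<psi>" for \<phi> \<psi>
  proof -
    have "\<phi> \<in> Cn {} \<longleftrightarrow> \<psi> \<in> Cn {}"
      by (simp only: Cn_empty_iff_tautology ltl_equiv_tautology[OF that])
    moreover have "\<phi> \<in> K \<longleftrightarrow> \<psi> \<in> K"
      using A ltl_equiv_supp[OF that] by simp
    moreover have "supp (\<gamma> \<phi>) = supp (\<gamma> \<psi>)"
      using congruent[OF that] by (simp add: supp_def)
    ultimately show ?thesis
      by (simp add: buchi_contraction_def)
  qed
  ultimately show ?thesis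
    unfolding rational_contraction_def by (auto simp: buchi_contraction_def)
qed

definition buchi_of :: "'a ltl set \<Rightarrow> 'a buchi" where
  "buchi_of X = (SOME B. buchi_wf B \<and> X = supp B)"

lemma buchi_of:
  assumes "X \<in> E_Buchi"
  shows "buchi_wf (buchi_of X)" "X = supp (buchi_of X)"
  using someI_ex[of "\<lambda>B. buchi_wf B \<and> X = supp B"] assms
  unfolding E_Buchi_def buchi_of_def by blast+

definition contraction_choice ::
  "'a ltl set \<Rightarrow> ('a ltl \<Rightarrow> 'a ltl set) \<Rightarrow> 'a ltl \<Rightarrow> 'a buchi" where
  "contraction_choice K c \<phi> =
     (if tautology \<phi> then buchi_univ
      else if \<phi> \<in> K then buchi_restrict (buchi_of (c \<phi>)) (LNeg \<phi>)
      else buchi_restrict buchi_univ (LNeg \<phi>))"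

lemma rational_contraction_tautology:
  assumes "rational_contraction K c" "\<phi> \<in> Cn {}"
  shows "c \<phi> = K"
proof -
  have "K \<subseteq> Cn (c \<phi> \<union> {\<phi>})"
    using assms(1) unfolding rational_contraction_def expansion_def by blast
  also have "\<dots> \<subseteq> Cn (c \<phi>)"
    using Cn_Un_tautology[OF assms(2)] .
  also have "\<dots> = c \<phi>"
    using assms(1) unfolding rational_contraction_def by metis
  finally show ?thesis
    using assms(1) unfolding rational_contraction_def by blast
qed

lemma supp_eq_Int_restrict_LNeg:
  assumes B: "buchi_wf B" and sub: "supp B \<subseteq> K" and recovery: "K \<subseteq> Cn (supp B \<union> {\<phi>})"
  shows "supp B = K \<inter> supp (buchi_restrict B (LNeg \<phi>))"
proof
  show "supp B \<subseteq> K \<inter> supp (buchi_restrict B (LNeg \<phi>))"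
    using sub supp_antimono[of "buchi_restrict B (LNeg \<phi>)" B] by (simp add: lang_buchi_restrict B)
next
  have "K \<subseteq> supp (buchi_restrict B \<phi>)"
  proof -
    have "supp B \<union> {\<phi>} \<subseteq> supp (buchi_restrict B \<phi>)"
      by (auto simp: supp_def lang_buchi_restrict B)
    with recovery show ?thesis
      using Cn_subset_supp[OF buchi_wf_restrict[OF B]] by blast
  qed
  then show "K \<inter> supp (buchi_restrict B (LNeg \<phi>)) \<subseteq> supp B"
    by (auto simp: supp_def lang_buchi_restrict B)
qed

lemma lang_contraction_choice:
  assumes "c \<phi> \<in> E_Buchi"
  shows "buchi_wf (contraction_choice K c \<phi>)"
    and "\<not> tautology \<phi> \<Longrightarrow> lang (contraction_choice K c \<phi>) =
      (if \<phi> \<in> K then lang (buchi_of (c \<phi>)) else UNIV) \<inter> {w. \<not> sat w \<phi>}"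
  using buchi_of(1)[OF assms]
  by (simp_all add: contraction_choice_def buchi_wf_univ buchi_wf_restrict lang_buchi_restrict)

lemma contraction_choice_buchi_choice:
  assumes K: "K \<in> E_Buchi" and rc: "rational_contraction K c" and re: "remains_in_E_Buchi c"
  shows "buchi_choice (contraction_choice K c)"
proof -
  have E: "c \<phi> \<in> E_Buchi" for \<phi>
    using re unfolding remains_in_E_Buchi_def by blast
  have lang: "lang (contraction_choice K c \<phi>) =
      (if \<phi> \<in> K then lang (buchi_of (c \<phi>)) else UNIV) \<inter> {w. \<not> sat w \<phi>}"
    if "\<not> tautology \<phi>" for \<phi>
    using lang_contraction_choice(2)[OF E that] .
  have "lang (contraction_choice K c \<phi>) \<noteq> {}" for \<phi>
  proof (cases "tautology \<phi>")
    case True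
    then show ?thesis by (simp add: contraction_choice_def)
  next
    case False
    have "\<exists>\<pi>. \<pi> \<in> (if \<phi> \<in> K then lang (buchi_of (c \<phi>)) else UNIV) \<and> \<not> sat \<pi> \<phi>"
    proof (cases "\<phi> \<in> K")
      case True
      with False rc have "\<phi> \<notin> supp (buchi_of (c \<phi>))"
        using Cn_empty_iff_tautology buchi_of(2)[OF E]
        unfolding rational_contraction_def by metis
      with True show ?thesis
        unfolding supp_def by auto
    next
      case False
      with \<open>\<not> tautology \<phi>\<close> show ?thesis
        unfolding tautology_def by auto
    qed
    then show ?thesis
      using lang[OF False] by blast
  qed
  moreover have "LNeg \<phi> \<in> supp (contraction_choice K c \<phi>)" if "\<not> tautology \<phi>" for \<phi>
    using that by (simp add: lang supp_def)
  moreover have "lang (contraction_choice K c \<phi>) = lang (contraction_choice K c \<psi>)"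
    if "ltl_equiv \<phi> \<psi>" for \<phi> \<psi>
  proof -
    have "c \<phi> = c \<psi>"
      using rc that unfolding rational_contraction_def by blast
    moreover have "\<phi> \<in> K \<longleftrightarrow> \<psi> \<in> K"
      using K ltl_equiv_supp[OF that] unfolding E_Buchi_def by blast
    moreover have "tautology \<phi> \<longleftrightarrow> tautology \<psi>"
      using ltl_equiv_tautology[OF that] .
    ultimately show ?thesis
      using lang[of \<phi>] lang[of \<psi>] ltl_equiv_sat[OF that]
      by (cases "tautology \<phi>") (simp_all add: contraction_choice_def)
  qed
  ultimately show ?thesis
    unfolding buchi_choice_def using lang_contraction_choice(1)[OF E] by auto
qed

lemma rational_contraction_eq_buchi_contraction:
  assumes rc: "rational_contraction K c" and re: "remains_in_E_Buchi c"
  shows "c = buchi_contraction K (contraction_choice K c)"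
proof
  fix \<phi>
  have K2: "c \<phi> \<subseteq> K" and K3: "\<phi> \<notin> K \<Longrightarrow> c \<phi> = K" and K5: "K \<subseteq> Cn (c \<phi> \<union> {\<phi>})"
    using rc unfolding rational_contraction_def expansion_def by blast+
  have E: "c \<phi> \<in> E_Buchi"
    using re unfolding remains_in_E_Buchi_def by blast
  show "c \<phi> = buchi_contraction K (contraction_choice K c) \<phi>"
  proof (cases "\<phi> \<notin> Cn {} \<and> \<phi> \<in> K")
    case True
    then have "contraction_choice K c \<phi> = buchi_restrict (buchi_of (c \<phi>)) (LNeg \<phi>)"
      by (simp add: contraction_choice_def Cn_empty_iff_tautology)
    moreover have "c \<phi> = K \<inter> supp (buchi_restrict (buchi_of (c \<phi>)) (LNeg \<phi>))"
      using supp_eq_Int_restrict_LNeg[OF buchi_of(1)[OF E]] buchi_of(2)[OF E, symmetric] K2 K5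
      by simp
    ultimately show ?thesis
      using True by (simp add: buchi_contraction_def)
  next
    case False
    then show ?thesis
      using K3 rational_contraction_tautology[OF rc] by (auto simp: buchi_contraction_def)
  qed
qed

theorem mainTheorem16:
  fixes K :: "('ap::finite) ltl set"
    and c :: "'ap ltl \<Rightarrow> 'ap ltl set"
  assumes "K \<in> E_Buchi"
  shows "(rational_contraction K c \<and> remains_in_E_Buchi c) \<longleftrightarrow>
         (\<exists>\<gamma>. buchi_choice \<gamma> \<and> c = buchi_contraction K \<gamma>)"
proof
  assume "rational_contraction K c \<and> remains_in_E_Buchi c"
  then show "\<exists>\<gamma>. buchi_choice \<gamma> \<and> c = buchi_contraction K \<gamma>"
    using contraction_choice_buchi_choice[OF assms] rational_contraction_eq_buchi_contraction
    by blast
next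
  assume "\<exists>\<gamma>. buchi_choice \<gamma> \<and> c = buchi_contraction K \<gamma>"
  then show "rational_contraction K c \<and> remains_in_E_Buchi c"
    using buchi_contraction_rational[OF assms] buchi_contraction_remains_in_E_Buchi[OF assms]
    by blast
qed

end
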